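(* Let $h$ be the Hahn sequence space, let $\Delta:h\to h$ be the forward difference operator $(\Delta x)_k=x_k-x_{k+1}$, and let $\Delta^*:h^*\to h^*$ be its adjoint. Then $\sigma_r(\Delta,h)=\sigma_p(\Delta^*,h^* )$.
   Context: Sequences are indexed by $\mathbb{N}=\{0,1,2,\dots\}$. The Hahn sequence space is $h=\{x=(x_k):\sum_{k=1}^\infty k|x_k-x_{k+1}|<\infty \text{ and } \lim_{k\to\infty}x_k=0\}$, a Banach space with norm $\|x\|_h=\sum_k k|x_k-x_{k+1}|+\sup_k|x_k|$. $\Delta$ is given by the matrix with $1$ on the main diagonal and $-1$ on the first superdiagonal. $h^*$ is the Banach dual of $h$ and $(\Delta^*f)(x)=f(\Delta x)$. For a bounded operator $T$ on a Banach space $X$: $\sigma_p(T,X)$ is the set of $\alpha\in\mathbb{C}$ with $\alpha I-T$ not injective; the residual spectrum $\sigma_r(T,X)$ is the set of $\alpha\in\mathbb{C}$ such that $\alpha I-T$ is injective but its range $R(\alpha I-T)$ is not dense in $X$. *)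

theory Defs
  imports "HOL-Analysis.Analysis"
begin

text \<open>Hahn sequence space over the complex numbers (sequences indexed by nat).
  The k = 0 term of the weighted sum vanishes, so summing from 0 agrees with
  summing from 1.\<close>
definition hahn :: "(nat \<Rightarrow> complex) set" where
  "hahn = {x. summable (\<lambda>k. real k * cmod (x k - x (Suc k))) \<and> x \<longlonglongrightarrow> 0}"

definition hahn_norm :: "(nat \<Rightarrow> complex) \<Rightarrow> real" where
  "hahn_norm x = (\<Sum>k. real k * cmod (x k - x (Suc k))) + (SUP k. cmod (x k))"

definition Delta :: "(nat \<Rightarrow> complex) \<Rightarrow> (nat \<Rightarrow> complex)" where
  "Delta x = (\<lambda>k. x k - x (Suc k))"

text \<open>Banach dual of h: bounded linear functionals on h (two functionals are
  identified iff they agree on h).\<close>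
definition hahn_dual :: "((nat \<Rightarrow> complex) \<Rightarrow> complex) set" where
  "hahn_dual = {f. (\<forall>x\<in>hahn. \<forall>y\<in>hahn. f (\<lambda>k. x k + y k) = f x + f y)
                 \<and> (\<forall>c. \<forall>x\<in>hahn. f (\<lambda>k. c * x k) = c * f x)
                 \<and> (\<exists>C. \<forall>x\<in>hahn. cmod (f x) \<le> C * hahn_norm x)}"

definition Delta_adj :: "((nat \<Rightarrow> complex) \<Rightarrow> complex) \<Rightarrow> ((nat \<Rightarrow> complex) \<Rightarrow> complex)" where
  "Delta_adj f = (\<lambda>x. f (Delta x))"

definition point_spectrum_Delta_adj :: "complex set" where
  "point_spectrum_Delta_adj = {\<alpha>. \<exists>f\<in>hahn_dual. (\<exists>x\<in>hahn. f x \<noteq> 0) \<and>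
      (\<forall>x\<in>hahn. \<alpha> * f x - Delta_adj f x = 0)}"

definition residual_spectrum_Delta :: "complex set" where
  "residual_spectrum_Delta = {\<alpha>.
      inj_on (\<lambda>x. (\<lambda>k. \<alpha> * x k - Delta x k)) hahn \<and>
      \<not> (\<forall>y\<in>hahn. \<forall>\<epsilon>>0. \<exists>x\<in>hahn. hahn_norm (\<lambda>k. y k - (\<alpha> * x k - Delta x k)) < \<epsilon>)}"

end

theory Submission
  imports Defs
begin

text \<open>Both spectra are empty. The Hahn norm of the part of x beyond index n is at most three
  times the remainder \<open>\<Sum>k>n. k |x k - x (k+1)|\<close>, so finitely supported sequences are dense
  in h. An eigenfunctional f of \<open>\<Delta>\<^sup>*\<close> satisfies \<open>\<alpha> f(e 0) = f(e 0)\<close> and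
  \<open>\<alpha> f(e (m+1)) = f(e (m+1)) - f(e m)\<close> on the unit vectors, hence vanishes on all of them
  and, by density and continuity, on h. As for \<open>\<alpha>I - \<Delta>\<close>: if \<open>|1 - \<alpha>| < 1\<close> the geometric
  sequence \<open>(1 - \<alpha>)\<^sup>k\<close> lies in its kernel; otherwise every finitely supported sequence is
  the image of a finitely supported one, so the range is dense.\<close>

definition unit_seq :: "nat \<Rightarrow> nat \<Rightarrow> complex" where
  "unit_seq n = (\<lambda>k. if k = n then 1 else 0)"

definition head_seq :: "nat \<Rightarrow> (nat \<Rightarrow> complex) \<Rightarrow> nat \<Rightarrow> complex" where
  "head_seq n x = (\<lambda>k. if k \<le> n then x k else 0)"

definition tail_seq :: "nat \<Rightarrow> (nat \<Rightarrow> complex) \<Rightarrow> nat \<Rightarrow> complex" where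
  "tail_seq n x = (\<lambda>k. if k \<le> n then 0 else x k)"

definition hahn_term :: "(nat \<Rightarrow> complex) \<Rightarrow> nat \<Rightarrow> real" where
  "hahn_term x k = real k * cmod (x k - x (Suc k))"

definition hahn_term_tail :: "(nat \<Rightarrow> complex) \<Rightarrow> nat \<Rightarrow> real" where
  "hahn_term_tail x m = (\<Sum>j. hahn_term x (j + m))"

lemma hahn_iff: "x \<in> hahn \<longleftrightarrow> summable (hahn_term x) \<and> x \<longlonglongrightarrow> 0"
  unfolding hahn_def hahn_term_def by simp

lemma hahn_norm_eq: "hahn_norm x = (\<Sum>k. hahn_term x k) + (SUP k. cmod (x k))"
  unfolding hahn_norm_def hahn_term_def by simp

lemma hahn_term_nonneg: "0 \<le> hahn_term x k"
  by (simp add: hahn_term_def)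

lemma hahn_eventually_eq:
  assumes "x \<in> hahn" and "\<And>k. n < k \<Longrightarrow> y k = x k"
  shows "y \<in> hahn"
proof -
  have "eventually (\<lambda>k. y k = x k) sequentially"
    using eventually_gt_at_top[of n] by (rule eventually_mono) (rule assms(2))
  moreover have "eventually (\<lambda>k. hahn_term y k = hahn_term x k) sequentially"
    using eventually_gt_at_top[of n] by (rule eventually_mono) (simp add: hahn_term_def assms(2))
  ultimately show ?thesis
    using assms(1) summable_cong tendsto_cong unfolding hahn_iff by metis
qed

lemma hahn_finite_support: "(\<And>k. n < k \<Longrightarrow> y k = 0) \<Longrightarrow> y \<in> hahn"
  by (rule hahn_eventually_eq[of "\<lambda>_. 0"]) (simp_all add: hahn_def)

lemma unit_seq_in_hahn: "unit_seq n \<in> hahn"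
  by (rule hahn_finite_support[of n]) (simp add: unit_seq_def)

lemma head_seq_in_hahn: "head_seq n x \<in> hahn"
  by (rule hahn_finite_support[of n]) (simp add: head_seq_def)

lemma tail_seq_in_hahn: "x \<in> hahn \<Longrightarrow> tail_seq n x \<in> hahn"
  by (rule hahn_eventually_eq[of x n]) (simp_all add: tail_seq_def)

lemma head_seq_plus_tail_seq: "(\<lambda>k. head_seq n x k + tail_seq n x k) = x"
  by (simp add: head_seq_def tail_seq_def fun_eq_iff)

lemma hahn_scale: "x \<in> hahn \<Longrightarrow> (\<lambda>k. c * x k) \<in> hahn"
proof -
  assume "x \<in> hahn"
  then have "summable (\<lambda>k. cmod c * hahn_term x k)" and "(\<lambda>k. c * x k) \<longlonglongrightarrow> 0"
    unfolding hahn_iff by (auto intro: summable_mult tendsto_mult_right_zero)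
  moreover have "hahn_term (\<lambda>k. c * x k) = (\<lambda>k. cmod c * hahn_term x k)"
    by (auto simp: hahn_term_def fun_eq_iff norm_mult simp flip: right_diff_distrib)
  ultimately show ?thesis
    unfolding hahn_iff by simp
qed

lemma hahn_norm_nonneg:
  assumes "x \<in> hahn"
  shows "0 \<le> hahn_norm x"
proof -
  have "summable (hahn_term x)" and "x \<longlonglongrightarrow> 0"
    using assms unfolding hahn_iff by auto
  then have "0 \<le> (\<Sum>k. hahn_term x k)"
    by (simp add: suminf_nonneg hahn_term_nonneg)
  moreover have "bdd_above (range (\<lambda>k. cmod (x k)))"
    using \<open>x \<longlonglongrightarrow> 0\<close> by (intro Bseq_bdd_above' convergent_imp_Bseq) (auto simp: convergent_def)
  then have "cmod (x 0) \<le> (SUP k. cmod (x k))"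
    by (rule cSUP_upper[rotated]) simp
  ultimately show ?thesis
    unfolding hahn_norm_eq by (meson add_nonneg_nonneg norm_ge_zero order_trans)
qed

context
  fixes x :: "nat \<Rightarrow> complex"
  assumes x_in_hahn: "x \<in> hahn"
begin

lemma summable_hahn_term: "summable (hahn_term x)"
  using x_in_hahn unfolding hahn_iff by simp

lemma hahn_term_tail_eq: "hahn_term_tail x m = suminf (hahn_term x) - (\<Sum>k<m. hahn_term x k)"
  unfolding hahn_term_tail_def by (rule suminf_minus_initial_segment[OF summable_hahn_term])

lemma hahn_term_tail_nonneg: "0 \<le> hahn_term_tail x m"
  unfolding hahn_term_tail_def
  by (rule suminf_nonneg) (simp_all add: summable_hahn_term hahn_term_nonneg)

lemma hahn_term_tail_antimono: "m \<le> n \<Longrightarrow> hahn_term_tail x n \<le> hahn_term_tail x m"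
  unfolding hahn_term_tail_eq by (auto intro!: sum_mono2 hahn_term_nonneg)

lemma hahn_term_tail_tendsto_0: "hahn_term_tail x \<longlonglongrightarrow> 0"
proof -
  have "(\<lambda>m. suminf (hahn_term x) - (\<Sum>k<m. hahn_term x k))
          \<longlonglongrightarrow> suminf (hahn_term x) - suminf (hahn_term x)"
    by (intro tendsto_diff tendsto_const summable_LIMSEQ summable_hahn_term)
  then show ?thesis
    unfolding hahn_term_tail_eq by simp
qed

text \<open>Since \<open>x \<longlonglongrightarrow> 0\<close>, \<open>x m\<close> telescopes into \<open>\<Sum>j\<ge>m. x j - x (j+1)\<close>, and every
  weight j in the tail is at least m.\<close>
lemma of_nat_mult_norm_le_hahn_term_tail: "real m * cmod (x m) \<le> hahn_term_tail x m"
proof -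
  have "(\<lambda>j. x (Suc j + m) - x (j + m)) sums (0 - x (0 + m))"
    using LIMSEQ_ignore_initial_segment[of x 0 m] x_in_hahn unfolding hahn_iff
    by (intro telescope_sums) auto
  then have "(\<lambda>j. of_nat m * (x (j + m) - x (Suc (j + m)))) sums (of_nat m * x m)"
    using sums_minus sums_mult by fastforce
  then have "cmod (of_nat m * x m) \<le> (\<Sum>j. hahn_term x (j + m))"
  proof (subst sums_unique, assumption, intro norm_suminf_le)
    show "norm (of_nat m * (x (j + m) - x (Suc (j + m)))) \<le> hahn_term x (j + m)" for j
      by (simp add: hahn_term_def norm_mult mult_right_mono)
    show "summable (\<lambda>j. hahn_term x (j + m))"
      using summable_hahn_term by (simp add: summable_iff_shift)
  qed
  then show ?thesis
    unfolding hahn_term_tail_def by (simp add: norm_mult)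
qed

lemma norm_le_hahn_term_tail:
  assumes "0 < m"
  shows "cmod (x m) \<le> hahn_term_tail x m"
proof -
  have "cmod (x m) \<le> real m * cmod (x m)"
    using assms mult_right_mono[of 1 "real m" "cmod (x m)"] by simp
  then show ?thesis
    using of_nat_mult_norm_le_hahn_term_tail[of m] by linarith
qed

lemma suminf_hahn_term_tail_seq:
  "(\<Sum>k. hahn_term (tail_seq n x) k) = real n * cmod (x (Suc n)) + hahn_term_tail x (Suc n)"
proof -
  have "(\<lambda>k. if k = n then real n * cmod (x (Suc n)) else 0) sums (real n * cmod (x (Suc n)))"
    by (rule sums_single)
  moreover have "(\<lambda>k. if n < k then hahn_term x k else 0) sums hahn_term_tail x (Suc n)"
  proof -
    have "(\<lambda>j. hahn_term x (j + Suc n)) sums hahn_term_tail x (Suc n)"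
      using summable_hahn_term unfolding hahn_term_tail_def
      by (simp add: summable_sums summable_iff_shift del: add_Suc_right)
    then show ?thesis
      by (subst sums_zero_iff_shift[of "Suc n", symmetric]) auto
  qed
  ultimately have "(\<lambda>k. (if k = n then real n * cmod (x (Suc n)) else 0)
                      + (if n < k then hahn_term x k else 0))
                   sums (real n * cmod (x (Suc n)) + hahn_term_tail x (Suc n))"
    by (rule sums_add)
  moreover have "(\<lambda>k. (if k = n then real n * cmod (x (Suc n)) else 0)
                      + (if n < k then hahn_term x k else 0)) = hahn_term (tail_seq n x)"
    by (auto simp: tail_seq_def hahn_term_def fun_eq_iff)
  ultimately show ?thesis
    by (simp add: sums_iff)
qed

lemma hahn_norm_tail_seq_le: "hahn_norm (tail_seq n x) \<le> 3 * hahn_term_tail x (Suc n)"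
proof -
  have "real n * cmod (x (Suc n)) \<le> real (Suc n) * cmod (x (Suc n))"
    by (intro mult_right_mono) auto
  also have "\<dots> \<le> hahn_term_tail x (Suc n)"
    by (rule of_nat_mult_norm_le_hahn_term_tail)
  finally have "(\<Sum>k. hahn_term (tail_seq n x) k) \<le> 2 * hahn_term_tail x (Suc n)"
    unfolding suminf_hahn_term_tail_seq by simp
  moreover have "cmod (tail_seq n x k) \<le> hahn_term_tail x (Suc n)" for k
  proof (cases "k \<le> n")
    case True
    then show ?thesis
      using hahn_term_tail_nonneg by (simp add: tail_seq_def)
  next
    case False
    then have "cmod (x k) \<le> hahn_term_tail x (Suc n)"
      using norm_le_hahn_term_tail[of k] hahn_term_tail_antimono[of "Suc n" k] by simp
    then show ?thesis
      using False by (simp add: tail_seq_def)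
  qed
  then have "(SUP k. cmod (tail_seq n x k)) \<le> hahn_term_tail x (Suc n)"
    by (intro cSUP_least) auto
  ultimately show ?thesis
    unfolding hahn_norm_eq by simp
qed

lemma hahn_norm_tail_seq_tendsto_0: "(\<lambda>n. hahn_norm (tail_seq n x)) \<longlonglongrightarrow> 0"
proof (rule real_tendsto_sandwich)
  show "eventually (\<lambda>n. 0 \<le> hahn_norm (tail_seq n x)) sequentially"
    by (simp add: hahn_norm_nonneg tail_seq_in_hahn x_in_hahn)
  show "eventually (\<lambda>n. hahn_norm (tail_seq n x) \<le> 3 * hahn_term_tail x (Suc n)) sequentially"
    by (simp add: hahn_norm_tail_seq_le)
  show "(\<lambda>n. 3 * hahn_term_tail x (Suc n)) \<longlonglongrightarrow> 0"
    using tendsto_mult_right_zero[OF LIMSEQ_Suc[OF hahn_term_tail_tendsto_0]] by simp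
qed simp

end

lemma hahn_dual_add:
  "f \<in> hahn_dual \<Longrightarrow> x \<in> hahn \<Longrightarrow> y \<in> hahn \<Longrightarrow> f (\<lambda>k. x k + y k) = f x + f y"
  unfolding hahn_dual_def by blast

lemma hahn_dual_scale: "f \<in> hahn_dual \<Longrightarrow> x \<in> hahn \<Longrightarrow> f (\<lambda>k. c * x k) = c * f x"
  unfolding hahn_dual_def by blast

lemma hahn_dual_zero: "f \<in> hahn_dual \<Longrightarrow> f (\<lambda>k. 0) = 0"
  using hahn_dual_scale[of f "\<lambda>k. 0" 0] hahn_finite_support[of 0 "\<lambda>k. 0"] by simp

lemma hahn_dual_diff:
  "f \<in> hahn_dual \<Longrightarrow> x \<in> hahn \<Longrightarrow> y \<in> hahn \<Longrightarrow> f (\<lambda>k. x k - y k) = f x - f y"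
  using hahn_dual_add[of f x "\<lambda>k. (- 1) * y k"] hahn_dual_scale[of f y "- 1"] hahn_scale[of y "- 1"]
  by simp

lemma hahn_dual_vanishes_on_finite_support:
  assumes f: "f \<in> hahn_dual" and unit: "\<And>m. f (unit_seq m) = 0"
  shows "(\<And>k. n \<le> k \<Longrightarrow> y k = 0) \<Longrightarrow> f y = 0"
proof (induction n arbitrary: y)
  case 0
  then have "y = (\<lambda>k. 0)"
    by auto
  then show ?case
    using hahn_dual_zero[OF f] by simp
next
  case (Suc n)
  have y'_in_hahn: "y(n := 0) \<in> hahn"
    using Suc.prems by (intro hahn_finite_support[of n]) auto
  have "f y = f (\<lambda>k. (y(n := 0)) k + y n * unit_seq n k)"
    by (rule arg_cong[where f = f]) (auto simp: unit_seq_def fun_eq_iff)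
  also have "\<dots> = f (y(n := 0)) + y n * f (unit_seq n)"
    using hahn_dual_add[OF f y'_in_hahn hahn_scale[OF unit_seq_in_hahn]]
      hahn_dual_scale[OF f unit_seq_in_hahn]
    by simp
  finally show ?case
    using Suc unit by simp
qed

lemma hahn_dual_eq_0_if_unit_seq:
  assumes f: "f \<in> hahn_dual" and unit: "\<And>m. f (unit_seq m) = 0" and x: "x \<in> hahn"
  shows "f x = 0"
proof -
  obtain C where C: "\<And>z. z \<in> hahn \<Longrightarrow> cmod (f z) \<le> C * hahn_norm z"
    using f unfolding hahn_dual_def by blast
  have "f (head_seq n x) = 0" for n
    by (rule hahn_dual_vanishes_on_finite_support[OF f unit, of "Suc n"]) (simp add: head_seq_def)
  then have f_tail: "f x = f (tail_seq n x)" for n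
    using hahn_dual_add[OF f head_seq_in_hahn[of n x] tail_seq_in_hahn[OF x, of n]]
    by (simp add: head_seq_plus_tail_seq)
  have "cmod (f x) \<le> C * hahn_norm (tail_seq n x)" for n
    unfolding f_tail[of n] by (rule C[OF tail_seq_in_hahn[OF x]])
  moreover have "(\<lambda>n. C * hahn_norm (tail_seq n x)) \<longlonglongrightarrow> 0"
    using tendsto_mult_right_zero[OF hahn_norm_tail_seq_tendsto_0[OF x]] by simp
  ultimately have "cmod (f x) \<le> 0"
    by (intro LIMSEQ_le_const) auto
  then show ?thesis
    by simp
qed

lemma eigenfunctional_Delta_adj_unit_seq:
  assumes f: "f \<in> hahn_dual" and eigen: "\<And>x. x \<in> hahn \<Longrightarrow> \<alpha> * f x - Delta_adj f x = 0"
  shows "f (unit_seq m) = 0"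
proof -
  have "Delta (unit_seq 0) = unit_seq 0"
    by (simp add: Delta_def unit_seq_def)
  then have base: "(\<alpha> - 1) * f (unit_seq 0) = 0"
    using eigen[OF unit_seq_in_hahn] by (simp add: Delta_adj_def algebra_simps)
  have step: "(\<alpha> - 1) * f (unit_seq (Suc m)) = - f (unit_seq m)" for m
  proof -
    have "Delta (unit_seq (Suc m)) = (\<lambda>k. unit_seq (Suc m) k - unit_seq m k)"
      by (auto simp: Delta_def unit_seq_def fun_eq_iff)
    then have "Delta_adj f (unit_seq (Suc m)) = f (unit_seq (Suc m)) - f (unit_seq m)"
      unfolding Delta_adj_def by (simp add: hahn_dual_diff[OF f unit_seq_in_hahn unit_seq_in_hahn])
    then show ?thesis
      using eigen[OF unit_seq_in_hahn] by (simp add: algebra_simps)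
  qed
  show ?thesis
  proof (cases "\<alpha> = 1")
    case True
    then show ?thesis
      using step[of m] by simp
  next
    case False
    show ?thesis
    proof (induction m)
      case 0
      show ?case
        using base False by simp
    next
      case (Suc m)
      show ?case
        using step[of m] Suc False by simp
    qed
  qed
qed

lemma point_spectrum_Delta_adj_empty: "point_spectrum_Delta_adj = {}"
  unfolding point_spectrum_Delta_adj_def
  using eigenfunctional_Delta_adj_unit_seq hahn_dual_eq_0_if_unit_seq by blast

lemma summable_of_nat_mult_power:
  fixes r :: real
  assumes "0 \<le> r" and "r < 1"
  shows "summable (\<lambda>k. real k * r ^ k)"
proof -
  have "summable (\<lambda>k. diffs (\<lambda>_. 1) k * r ^ k)"
    by (rule termdiff_converges[of r 1]) (use assms in \<open>auto intro: summable_geometric\<close>)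
  then have "summable (\<lambda>k. real (Suc k) * r ^ k)"
    by (simp add: diffs_def)
  then show ?thesis
    by (rule summable_comparison_test[rotated])
       (use assms in \<open>auto intro!: exI[of _ 0] mult_right_mono\<close>)
qed

lemma geometric_seq_in_hahn:
  assumes "cmod \<beta> < 1"
  shows "(\<lambda>k. \<beta> ^ k) \<in> hahn"
proof -
  have "\<beta> ^ k - \<beta> ^ Suc k = (1 - \<beta>) * \<beta> ^ k" for k
    by (simp add: algebra_simps)
  then have "hahn_term (\<lambda>k. \<beta> ^ k) = (\<lambda>k. cmod (1 - \<beta>) * (real k * cmod \<beta> ^ k))"
    by (simp add: hahn_term_def fun_eq_iff norm_mult norm_power)
  moreover have "summable (\<lambda>k. cmod (1 - \<beta>) * (real k * cmod \<beta> ^ k))"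
    using assms by (intro summable_mult summable_of_nat_mult_power) auto
  moreover have "(\<lambda>k. \<beta> ^ k) \<longlonglongrightarrow> 0"
    using assms by (intro LIMSEQ_power_zero) simp
  ultimately show ?thesis
    unfolding hahn_iff by simp
qed

lemma norm_one_minus_ge_1_if_inj_on:
  assumes "inj_on (\<lambda>x. (\<lambda>k. \<alpha> * x k - Delta x k)) hahn"
  shows "1 \<le> cmod (1 - \<alpha>)"
proof (rule ccontr)
  assume "\<not> 1 \<le> cmod (1 - \<alpha>)"
  then have geometric_in_hahn: "(\<lambda>k. (1 - \<alpha>) ^ k) \<in> hahn"
    by (intro geometric_seq_in_hahn) simp
  have "(\<lambda>k. \<alpha> * (1 - \<alpha>) ^ k - Delta (\<lambda>k. (1 - \<alpha>) ^ k) k)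
        = (\<lambda>k. \<alpha> * 0 - Delta (\<lambda>k. 0) k)"
    by (auto simp: Delta_def fun_eq_iff algebra_simps)
  from inj_onD[OF assms this geometric_in_hahn hahn_finite_support[of 0]]
  have "(\<lambda>k. (1 - \<alpha>) ^ k) = (\<lambda>k. 0)"
    by simp
  then show False
    by (metis power_0 zero_neq_one)
qed

text \<open>With \<open>\<beta> = 1 - \<alpha>\<close> the equation \<open>(\<alpha>I - \<Delta>) x = y\<close> reads
  \<open>x (k+1) - \<beta> x k = y k\<close>; solving it backwards from \<open>x (n+1) = 0\<close> gives
  \<open>x k = - (\<Sum>j=k..n. y j / \<beta>\<^bsup>j-k+1\<^esup>)\<close>.\<close>
lemma finite_support_in_range:
  assumes "\<alpha> \<noteq> 1" and y: "\<And>k. n < k \<Longrightarrow> y k = 0"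
  shows "\<exists>x\<in>hahn. (\<lambda>k. \<alpha> * x k - Delta x k) = y"
proof
  define b where "b = inverse (1 - \<alpha>)"
  define x where "x k = - (\<Sum>j=k..n. y j * b ^ (j - k + 1))" for k
  show "x \<in> hahn"
    by (rule hahn_finite_support[of n]) (simp add: x_def)
  have recurrence: "(1 - \<alpha>) * x k = x (Suc k) - y k" if "k \<le> n" for k
  proof -
    have "(\<Sum>j=Suc k..n. y j * b ^ (j - k + 1)) = b * (\<Sum>j=Suc k..n. y j * b ^ (j - Suc k + 1))"
      unfolding sum_distrib_left by (rule sum.cong) (auto simp: Suc_diff_Suc)
    then have "x k = b * (x (Suc k) - y k)"
      using that unfolding x_def by (simp add: sum.atLeast_Suc_atMost algebra_simps)
    moreover have "(1 - \<alpha>) * b = 1"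
      using assms(1) by (simp add: b_def)
    ultimately show ?thesis
      by (metis mult.assoc mult_1)
  qed
  show "(\<lambda>k. \<alpha> * x k - Delta x k) = y"
  proof
    fix k
    show "\<alpha> * x k - Delta x k = y k"
    proof (cases "k \<le> n")
      case True
      have "\<alpha> * x k - Delta x k = x (Suc k) - (1 - \<alpha>) * x k"
        by (simp add: Delta_def algebra_simps)
      then show ?thesis
        using recurrence[OF True] by simp
    next
      case False
      then show ?thesis
        using y by (simp add: Delta_def x_def)
    qed
  qed
qed

lemma range_dense_if_ne_1:
  assumes "\<alpha> \<noteq> 1" and "y \<in> hahn" and "\<epsilon> > 0"
  shows "\<exists>x\<in>hahn. hahn_norm (\<lambda>k. y k - (\<alpha> * x k - Delta x k)) < \<epsilon>"
proof -
  obtain n where n: "hahn_norm (tail_seq n y) < \<epsilon>"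
    using order_tendstoD(2)[OF hahn_norm_tail_seq_tendsto_0[OF \<open>y \<in> hahn\<close>] \<open>\<epsilon> > 0\<close>]
    by (auto simp: eventually_sequentially)
  obtain x where "x \<in> hahn" and "(\<lambda>k. \<alpha> * x k - Delta x k) = head_seq n y"
    using finite_support_in_range[OF \<open>\<alpha> \<noteq> 1\<close>, of n "head_seq n y"] by (auto simp: head_seq_def)
  moreover have "(\<lambda>k. y k - head_seq n y k) = tail_seq n y"
    by (simp add: head_seq_def tail_seq_def fun_eq_iff)
  ultimately show ?thesis
    using n by (metis (no_types))
qed

lemma residual_spectrum_Delta_empty: "residual_spectrum_Delta = {}"
proof -
  have "\<alpha> \<noteq> 1" if "inj_on (\<lambda>x. (\<lambda>k. \<alpha> * x k - Delta x k)) hahn" for \<alpha>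
    using norm_one_minus_ge_1_if_inj_on[OF that] by auto
  then show ?thesis
    unfolding residual_spectrum_Delta_def using range_dense_if_ne_1 by blast
qed

theorem theorem4p5:
  shows "residual_spectrum_Delta = point_spectrum_Delta_adj"
  by (simp add: residual_spectrum_Delta_empty point_spectrum_Delta_adj_empty)

end
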